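(* Let $\Gamma$ be a group, $\alpha\in\mathrm{Aut}(\Gamma)$ and $\omega:\Gamma\times\Gamma\to\Gamma$, $\omega(g,h)=\alpha(g)$. Consider the action $\rho$ of $V$ on $\prod_{\mathbb Q_2}\Gamma$ given by $$\rho(v)(a)(x)=\alpha^{-\log_2(v'(v^{-1}x))}\big(a(v^{-1}x)\big),\quad a:\mathbb Q_2\to\Gamma,\ v\in V,\ x\in\mathbb Q_2.$$ Then $G(\omega)$ is isomorphic to the (unrestricted twisted permutational wreath product) $\prod_{\mathbb Q_2}\Gamma\rtimes_\rho V$.
   Context: $\{0,1\}^*$ denotes the finite words over $\{0,1\}$ (including the empty word), $|u|$ the length; $\mathfrak C=\{0,1\}^{\mathbb N}$; $\mathbb Q_2\subset\mathfrak C$ is the set of eventually-zero sequences; $\prod_{\mathbb Q_2}\Gamma$ is the group of all maps $\mathbb Q_2\to\Gamma$ under pointwise product. A finite complete prefix code is a finite set $\{t_1,\dots,t_n\}\subset\{0,1\}^*$ such that every $x\in\mathfrak C$ has exactly one $t_i$ as prefix. Thompson's group $V$ is the group of homeomorphisms $v$ of $\mathfrak C$ for which there exist finite complete prefix codes $\{t_i\},\{s_i\}$ and a permutation $\sigma$ with $v(t_iw)=s_{\sigma(i)}w$ for all $i$, $w\in\mathfrak C$ ($V$ preserves $\mathbb Q_2$); for $y\in\mathfrak C$ with prefix $t_i$, $v'(y):=2^{|t_i|-|s_{\sigma(i)}|}$. $K(\omega)$ is the group of maps $a:\{0,1\}^*\to\Gamma$ with $a(u)=\omega(a(u0),a(u1))$;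 $V$ acts on it by $\pi(v)(a)(s_{\sigma(i)}u)=a(t_iu)$ for all $i$, $u\in\{0,1\}^*$ (determining $\pi(v)(a)\in K(\omega)$ uniquely); $G(\omega):=K(\omega)\rtimes V$ with $vav^{-1}=\pi(v)(a)$. *)

theory Defs
  imports "HOL-Algebra.Group"
begin

text \<open>Points of the Cantor space are functions nat to bool (False = 0, True = 1);
finite words are bool lists.\<close>

definition cat :: "bool list \<Rightarrow> (nat \<Rightarrow> bool) \<Rightarrow> (nat \<Rightarrow> bool)" where
  "cat u w = (\<lambda>k. if k < length u then u ! k else w (k - length u))"

definition is_prefix :: "bool list \<Rightarrow> (nat \<Rightarrow> bool) \<Rightarrow> bool" where
  "is_prefix t x \<longleftrightarrow> (\<forall>i<length t. x i = t ! i)"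

definition complete_prefix_code :: "bool list set \<Rightarrow> bool" where
  "complete_prefix_code T \<longleftrightarrow> finite T \<and> (\<forall>x. \<exists>!t. t \<in> T \<and> is_prefix t x)"

definition Q2 :: "(nat \<Rightarrow> bool) set" where
  "Q2 = {x. \<exists>n. \<forall>m\<ge>n. \<not> x m}"

definition V_rep :: "((nat \<Rightarrow> bool) \<Rightarrow> (nat \<Rightarrow> bool)) \<Rightarrow> bool list list \<Rightarrow> bool list list \<Rightarrow> (nat \<Rightarrow> nat) \<Rightarrow> bool" where
  "V_rep v ts ss \<sigma> \<longleftrightarrow> length ts = length ss \<and> distinct ts \<and> distinct ss
     \<and> complete_prefix_code (set ts) \<and> complete_prefix_code (set ss)
     \<and> bij_betw \<sigma> {..<length ts} {..<length ts}
     \<and> (\<forall>i<length ts. \<forall>w. v (cat (ts ! i) w) = cat (ss ! \<sigma> i) w)"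

definition ThompsonV :: "((nat \<Rightarrow> bool) \<Rightarrow> (nat \<Rightarrow> bool)) set" where
  "ThompsonV = {v. bij v \<and> (\<exists>ts ss \<sigma>. V_rep v ts ss \<sigma>)}"

definition V_grp :: "((nat \<Rightarrow> bool) \<Rightarrow> (nat \<Rightarrow> bool)) monoid" where
  "V_grp = \<lparr>carrier = ThompsonV, mult = (\<circ>), one = id\<rparr>"

text \<open>logder v y = log_2 (v'(y)) = |t_i| - |s_sigma(i)| for the prefix t_i of y
(independent of the chosen codes).\<close>
definition logder :: "((nat \<Rightarrow> bool) \<Rightarrow> (nat \<Rightarrow> bool)) \<Rightarrow> (nat \<Rightarrow> bool) \<Rightarrow> int" where
  "logder v y = (THE d. \<exists>t s. is_prefix t y \<and> (\<forall>w. v (cat t w) = cat s w)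
                      \<and> d = int (length t) - int (length s))"

definition semidirect :: "('a, 'm) monoid_scheme \<Rightarrow> ('c \<Rightarrow> 'a \<Rightarrow> 'a) \<Rightarrow> ('c, 'n) monoid_scheme
     \<Rightarrow> ('a \<times> 'c) monoid" where
  "semidirect N act H = \<lparr>carrier = carrier N \<times> carrier H,
     mult = (\<lambda>(a, v) (b, w). (a \<otimes>\<^bsub>N\<^esub> act v b, v \<otimes>\<^bsub>H\<^esub> w)),
     one = (\<one>\<^bsub>N\<^esub>, \<one>\<^bsub>H\<^esub>)\<rparr>"

definition K_grp :: "('g, 'z) monoid_scheme \<Rightarrow> ('g \<Rightarrow> 'g \<Rightarrow> 'g) \<Rightarrow> (bool list \<Rightarrow> 'g) monoid" where
  "K_grp \<Gamma> \<omega> = \<lparr>carrier = {a. (\<forall>u. a u \<in> carrier \<Gamma>)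
                         \<and> (\<forall>u. a u = \<omega> (a (u @ [False])) (a (u @ [True])))},
     mult = (\<lambda>a b u. a u \<otimes>\<^bsub>\<Gamma>\<^esub> b u),
     one = (\<lambda>_. \<one>\<^bsub>\<Gamma>\<^esub>)\<rparr>"

definition pi_act :: "('g, 'z) monoid_scheme \<Rightarrow> ('g \<Rightarrow> 'g \<Rightarrow> 'g)
     \<Rightarrow> ((nat \<Rightarrow> bool) \<Rightarrow> (nat \<Rightarrow> bool)) \<Rightarrow> (bool list \<Rightarrow> 'g) \<Rightarrow> (bool list \<Rightarrow> 'g)" where
  "pi_act \<Gamma> \<omega> v a = (THE b. b \<in> carrier (K_grp \<Gamma> \<omega>) \<and>
      (\<exists>ts ss \<sigma>. V_rep v ts ss \<sigma> \<and>
         (\<forall>i<length ts. \<forall>u. b (ss ! \<sigma> i @ u) = a (ts ! i @ u))))"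

definition G_omega :: "('g, 'z) monoid_scheme \<Rightarrow> ('g \<Rightarrow> 'g \<Rightarrow> 'g)
     \<Rightarrow> ((bool list \<Rightarrow> 'g) \<times> ((nat \<Rightarrow> bool) \<Rightarrow> (nat \<Rightarrow> bool))) monoid" where
  "G_omega \<Gamma> \<omega> = semidirect (K_grp \<Gamma> \<omega>) (pi_act \<Gamma> \<omega>) V_grp"

definition apow :: "('g, 'z) monoid_scheme \<Rightarrow> ('g \<Rightarrow> 'g) \<Rightarrow> int \<Rightarrow> 'g \<Rightarrow> 'g" where
  "apow \<Gamma> \<alpha> k g = (if k \<ge> 0 then (\<alpha> ^^ nat k) g
                     else (inv_into (carrier \<Gamma>) \<alpha> ^^ nat (- k)) g)"

definition ProdQ2 :: "('g, 'z) monoid_scheme \<Rightarrow> ((nat \<Rightarrow> bool) \<Rightarrow> 'g) monoid" where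
  "ProdQ2 \<Gamma> = \<lparr>carrier = PiE Q2 (\<lambda>_. carrier \<Gamma>),
     mult = (\<lambda>a b. restrict (\<lambda>x. a x \<otimes>\<^bsub>\<Gamma>\<^esub> b x) Q2),
     one = restrict (\<lambda>_. \<one>\<^bsub>\<Gamma>\<^esub>) Q2\<rparr>"

definition rho_act :: "('g, 'z) monoid_scheme \<Rightarrow> ('g \<Rightarrow> 'g)
     \<Rightarrow> ((nat \<Rightarrow> bool) \<Rightarrow> (nat \<Rightarrow> bool)) \<Rightarrow> ((nat \<Rightarrow> bool) \<Rightarrow> 'g) \<Rightarrow> ((nat \<Rightarrow> bool) \<Rightarrow> 'g)" where
  "rho_act \<Gamma> \<alpha> v a = restrict (\<lambda>x. apow \<Gamma> \<alpha> (- logder v (inv_into UNIV v x)) (a (inv_into UNIV v x))) Q2"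

definition Wreath :: "('g, 'z) monoid_scheme \<Rightarrow> ('g \<Rightarrow> 'g)
     \<Rightarrow> (((nat \<Rightarrow> bool) \<Rightarrow> 'g) \<times> ((nat \<Rightarrow> bool) \<Rightarrow> (nat \<Rightarrow> bool))) monoid" where
  "Wreath \<Gamma> \<alpha> = semidirect (ProdQ2 \<Gamma>) (rho_act \<Gamma> \<alpha>) V_grp"

end

theory Submission
  imports Defs
begin

text \<open>For \<open>\<omega>(g, h) = \<alpha>(g)\<close> the defining relation of \<open>K(\<omega>)\<close> reads \<open>a(u) = \<alpha>(a(u0))\<close>.
Hence along an eventually-zero sequence \<open>x\<close> the values \<open>\<alpha>^n(a(x|n))\<close> are constant once \<open>n\<close>
passes the last 1 of \<open>x\<close>; calling this value \<open>\<Phi>(a)(x)\<close> gives a bijective homomorphism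
\<open>\<Phi> : K(\<omega>) \<rightarrow> \<Prod>\<^sub>Q\<^sub>2 \<Gamma>\<close> with inverse \<open>f \<mapsto> (u \<mapsto> \<alpha>^(-|u|)(f(u0\<^sup>\<infinity>)))\<close>.
If \<open>v(tw) = sw\<close>, then \<open>\<pi>(v)\<close> moves the value of \<open>a\<close> at \<open>tw\<close> to \<open>sw\<close>, and under \<open>\<Phi>\<close> this shifts
the exponent of \<open>\<alpha>\<close> from \<open>|t| + N\<close> to \<open>|s| + N\<close>, i.e. by \<open>-log\<^sub>2 v'(tw)\<close>: exactly the twist
in \<open>\<rho>\<close>. So \<open>(a, v) \<mapsto> (\<Phi>(a), v)\<close> is an isomorphism of the semidirect products.\<close>

definition zeros :: "nat \<Rightarrow> bool" where
  "zeros = (\<lambda>_. False)"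

definition initial :: "nat \<Rightarrow> (nat \<Rightarrow> bool) \<Rightarrow> bool list" where
  "initial n x = map x [0..<n]"

definition zero_tail :: "(nat \<Rightarrow> bool) \<Rightarrow> nat" where
  "zero_tail x = (SOME n. \<forall>m\<ge>n. \<not> x m)"

lemma zero_tail:
  assumes "x \<in> Q2"
  shows "\<forall>m\<ge>zero_tail x. \<not> x m"
proof -
  obtain n where "\<forall>m\<ge>n. \<not> x m"
    using assms unfolding Q2_def by auto
  then show ?thesis
    unfolding zero_tail_def by (rule someI)
qed

lemma cat_append: "cat s (cat r w) = cat (s @ r) w"
  unfolding cat_def by (auto simp: nth_append)

lemma initial_cat: "initial (length t + N) (cat t w) = t @ initial N w"
  unfolding initial_def cat_def by (rule nth_equalityI) (auto simp: nth_append)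

lemma length_initial [simp]: "length (initial n x) = n"
  by (simp add: initial_def)

lemma initial_length_cat: "initial (length u) (cat u w) = u"
  using initial_cat[of u 0 w] by (simp add: initial_def)

lemma initial_append_replicate:
  assumes "\<forall>m\<ge>n. \<not> x m"
  shows "initial (n + d) x = initial n x @ replicate d False"
  using assms unfolding initial_def by (intro nth_equalityI) (auto simp: nth_append)

lemma cat_initial_zeros: "\<forall>m\<ge>n. \<not> x m \<Longrightarrow> cat (initial n x) zeros = x"
  unfolding cat_def initial_def zeros_def by (auto simp: fun_eq_iff)

lemma cat_eventually_zero: "\<forall>m\<ge>N. \<not> w m \<Longrightarrow> \<forall>m\<ge>length t + N. \<not> cat t w m"
  unfolding cat_def by auto

lemma cat_zeros_eventually_zero: "\<forall>m\<ge>length u. \<not> cat u zeros m"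
  by (simp add: cat_def zeros_def)

lemma cat_zeros_in_Q2: "cat u zeros \<in> Q2"
  using cat_zeros_eventually_zero unfolding Q2_def by blast

lemma cat_append_False_zeros: "cat (u @ [False]) zeros = cat u zeros"
  unfolding cat_def zeros_def by (auto simp: fun_eq_iff nth_append)

lemma length_eq_if_cat_eq:
  assumes "\<forall>w. cat p w = cat q w"
  shows "length p = length q"
proof -
  have False if "\<forall>w. cat p w = cat q w" "length p < length q" for p q :: "bool list"
    using that(1)[rule_format, of "\<lambda>_. \<not> q ! length p"] that(2)
    unfolding cat_def by (auto dest: fun_cong[of _ _ "length p"])
  then show ?thesis
    using assms by (metis linorder_neqE_nat)
qed

lemma is_prefix_cat: "is_prefix t (cat t w)"
  unfolding is_prefix_def cat_def by auto

lemma cat_prefix_shift: "is_prefix s x \<Longrightarrow> x = cat s (\<lambda>k. x (k + length s))"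
  unfolding is_prefix_def cat_def by (auto simp: fun_eq_iff)

lemma is_prefix_take:
  assumes "is_prefix t y" "is_prefix t' y" "length t' \<le> length t"
  shows "take (length t') t = t'"
  using assms unfolding is_prefix_def by (intro nth_equalityI) auto

lemma cat_image_length:
  assumes "\<forall>w. v (cat (t @ r) w) = cat s' w" "\<forall>w. v (cat t w) = cat s w"
  shows "length s' = length s + length r"
proof -
  have "\<forall>w. cat (s @ r) w = cat s' w"
    using assms by (metis cat_append)
  then have "length (s @ r) = length s'"
    by (rule length_eq_if_cat_eq)
  then show ?thesis
    by simp
qed

lemma logder_cat:
  assumes v: "\<forall>w. v (cat t w) = cat s w"
  shows "logder v (cat t w) = int (length t) - int (length s)"
  unfolding logder_def
proof (rule the_equality)
  show "\<exists>t' s'. is_prefix t' (cat t w) \<and> (\<forall>w. v (cat t' w) = cat s' w)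
      \<and> int (length t) - int (length s) = int (length t') - int (length s')"
    using v is_prefix_cat by blast
next
  fix d
  assume "\<exists>t' s'. is_prefix t' (cat t w) \<and> (\<forall>w. v (cat t' w) = cat s' w)
      \<and> d = int (length t') - int (length s')"
  then obtain t' s' where t': "is_prefix t' (cat t w)" "\<forall>w. v (cat t' w) = cat s' w"
    and d: "d = int (length t') - int (length s')"
    by blast
  show "d = int (length t) - int (length s)"
  proof (cases "length t' \<le> length t")
    case True
    then obtain r where "t = t' @ r"
      by (metis is_prefix_take[OF is_prefix_cat t'(1)] append_take_drop_id)
    then show ?thesis
      using cat_image_length[of v t' r s s'] v t'(2) d by simp
  next
    case False
    then obtain r where "t' = t @ r"
      by (metis is_prefix_take[OF t'(1) is_prefix_cat] append_take_drop_id nle_le)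
    then show ?thesis
      using cat_image_length[of v t r s' s] v t'(2) d by simp
  qed
qed

lemma V_rep_cat: "V_rep v ts ss \<sigma> \<Longrightarrow> i < length ts \<Longrightarrow> \<forall>w. v (cat (ts ! i) w) = cat (ss ! \<sigma> i) w"
  unfolding V_rep_def by blast

lemma V_rep_range_prefix:
  assumes "V_rep v ts ss \<sigma>"
  obtains i where "i < length ts" "is_prefix (ss ! \<sigma> i) x"
proof -
  have code: "complete_prefix_code (set ss)" and len: "length ts = length ss"
    and \<sigma>: "bij_betw \<sigma> {..<length ts} {..<length ts}"
    using assms unfolding V_rep_def by auto
  obtain j where j: "j < length ss" "is_prefix (ss ! j) x"
    using code unfolding complete_prefix_code_def by (metis in_set_conv_nth)
  then obtain i where "i < length ts" "\<sigma> i = j"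
    using \<sigma> len by (metis bij_betw_iff_bijections lessThan_iff)
  then show ?thesis
    using that j by blast
qed

lemma V_rep_Q2_cat:
  assumes "V_rep v ts ss \<sigma>" "x \<in> Q2"
  obtains i w N where "i < length ts" "x = cat (ss ! \<sigma> i) w" "\<forall>m\<ge>N. \<not> w m"
proof -
  obtain i where i: "i < length ts" "is_prefix (ss ! \<sigma> i) x"
    using V_rep_range_prefix[OF assms(1)] .
  obtain N where "\<forall>m\<ge>N. \<not> x m"
    using assms(2) unfolding Q2_def by auto
  then have "\<forall>m\<ge>N. \<not> x (m + length (ss ! \<sigma> i))"
    by auto
  then show ?thesis
    using that i cat_prefix_shift[OF i(2)] by blast
qed

lemma funpow_in_set: "bij_betw f A A \<Longrightarrow> x \<in> A \<Longrightarrow> (f ^^ n) x \<in> A"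
  using bij_betw_funpow bij_betwE by blast

lemma inv_into_funpow_cancel:
  assumes "bij_betw f A A" "x \<in> A"
  shows "(inv_into A f ^^ n) ((f ^^ n) x) = x"
  using assms(2)
proof (induction n arbitrary: x)
  case (Suc n)
  have "(inv_into A f ^^ Suc n) ((f ^^ Suc n) x) = (inv_into A f ^^ n) (inv_into A f (f ((f ^^ n) x)))"
    using funpow_swap1[of "inv_into A f" n] by simp
  also have "\<dots> = x"
    using Suc assms(1) by (simp add: bij_betw_imp_inj_on funpow_in_set)
  finally show ?case .
qed simp

lemma funpow_inv_into_cancel:
  assumes "bij_betw f A A" "x \<in> A"
  shows "(f ^^ n) ((inv_into A f ^^ n) x) = x"
  using assms(2)
proof (induction n arbitrary: x)
  case (Suc n)
  have "(f ^^ Suc n) ((inv_into A f ^^ Suc n) x) = (f ^^ n) (f (inv_into A f ((inv_into A f ^^ n) x)))"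
    using funpow_swap1[of f n] by simp
  also have "\<dots> = x"
    using Suc assms(1) bij_betw_inv_into[OF assms(1)]
    by (simp add: bij_betw_imp_surj_on f_inv_into_f funpow_in_set)
  finally show ?case .
qed simp

lemma semidirect_iso:
  assumes bij: "bij_betw \<phi> (carrier N) (carrier N')"
    and mult: "\<And>a b. a \<in> carrier N \<Longrightarrow> b \<in> carrier N \<Longrightarrow> \<phi> (a \<otimes>\<^bsub>N\<^esub> b) = \<phi> a \<otimes>\<^bsub>N'\<^esub> \<phi> b"
    and closed: "\<And>v b. v \<in> carrier H \<Longrightarrow> b \<in> carrier N \<Longrightarrow> act v b \<in> carrier N"
    and equivariant: "\<And>v b. v \<in> carrier H \<Longrightarrow> b \<in> carrier N \<Longrightarrow> \<phi> (act v b) = act' v (\<phi> b)"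
  shows "(\<lambda>(a, v). (\<phi> a, v)) \<in> iso (semidirect N act H) (semidirect N' act' H)"
proof -
  have "bij_betw (\<lambda>(a, v). (\<phi> a, v)) (carrier N \<times> carrier H) (carrier N' \<times> carrier H)"
    using bij_betw_map_prod[OF bij bij_betw_id[of "carrier H"]] unfolding map_prod_def id_def .
  then show ?thesis
    using bij_betwE[OF bij] unfolding iso_def hom_def semidirect_def
    by (auto simp: mult closed equivariant)
qed

subsection \<open>The isomorphism \<open>K(\<omega>) \<cong> \<Prod>\<^sub>Q\<^sub>2 \<Gamma>\<close>\<close>

locale automorphism =
  fixes \<Gamma> :: "('g, 'z) monoid_scheme" (structure) and \<alpha> :: "'g \<Rightarrow> 'g"
  assumes aut: "\<alpha> \<in> iso \<Gamma> \<Gamma>"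
begin

abbreviation "\<beta> \<equiv> inv_into (carrier \<Gamma>) \<alpha>"

abbreviation "K \<equiv> K_grp \<Gamma> (\<lambda>g h. \<alpha> g)"

lemma bij_aut: "bij_betw \<alpha> (carrier \<Gamma>) (carrier \<Gamma>)"
  using aut by (simp add: iso_def)

lemma aut_pow_closed: "g \<in> carrier \<Gamma> \<Longrightarrow> (\<alpha> ^^ n) g \<in> carrier \<Gamma>"
  using funpow_in_set[OF bij_aut] .

lemma aut_inv_pow_closed: "g \<in> carrier \<Gamma> \<Longrightarrow> (\<beta> ^^ n) g \<in> carrier \<Gamma>"
  using funpow_in_set[OF bij_betw_inv_into[OF bij_aut]] .

lemma aut_pow_mult: "g \<in> carrier \<Gamma> \<Longrightarrow> h \<in> carrier \<Gamma> \<Longrightarrow> (\<alpha> ^^ n) (g \<otimes> h) = (\<alpha> ^^ n) g \<otimes> (\<alpha> ^^ n) h"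
proof (induction n)
  case (Suc n)
  have "\<alpha> (g' \<otimes> h') = \<alpha> g' \<otimes> \<alpha> h'" if "g' \<in> carrier \<Gamma>" "h' \<in> carrier \<Gamma>" for g' h'
    using aut that by (simp add: iso_def hom_def)
  then show ?case
    using Suc by (simp add: aut_pow_closed)
qed simp

lemma apow_aut_pow:
  assumes "g \<in> carrier \<Gamma>" "int m + k \<ge> 0"
  shows "apow \<Gamma> \<alpha> k ((\<alpha> ^^ m) g) = (\<alpha> ^^ nat (int m + k)) g"
proof (cases "k \<ge> 0")
  case True
  have "(\<alpha> ^^ nat k) ((\<alpha> ^^ m) g) = (\<alpha> ^^ (nat k + m)) g"
    by (simp add: funpow_add)
  then show ?thesis
    using True unfolding apow_def by (simp add: nat_add_distrib add.commute)
next
  case False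
  then have "m = nat (- k) + nat (int m + k)"
    using assms(2) by simp
  then have "(\<alpha> ^^ m) g = (\<alpha> ^^ nat (- k)) ((\<alpha> ^^ nat (int m + k)) g)"
    by (metis funpow_add o_apply)
  then show ?thesis
    using False unfolding apow_def
    by (simp add: inv_into_funpow_cancel[OF bij_aut] aut_pow_closed assms(1))
qed

text \<open>\<open>simp\<close> must not see the carrier condition of \<open>K\<close>: its relation \<open>a u = \<alpha> (a (u @ [False]))\<close>
loops as a rewrite rule.\<close>

lemma K_closed: "a \<in> carrier K \<Longrightarrow> a u \<in> carrier \<Gamma>"
  unfolding K_grp_def partial_object.simps mem_Collect_eq by metis

lemma K_append_False: "a \<in> carrier K \<Longrightarrow> \<alpha> (a (u @ [False])) = a u"
  unfolding K_grp_def partial_object.simps mem_Collect_eq by metis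

lemma K_append_replicate: "a \<in> carrier K \<Longrightarrow> (\<alpha> ^^ d) (a (u @ replicate d False)) = a u"
proof (induction d)
  case (Suc d)
  have "u @ replicate (Suc d) False = (u @ replicate d False) @ [False]"
    by (simp add: replicate_append_same)
  then have "(\<alpha> ^^ Suc d) (a (u @ replicate (Suc d) False))
      = (\<alpha> ^^ d) (\<alpha> (a ((u @ replicate d False) @ [False])))"
    by (simp only: funpow_Suc_right o_apply)
  then show ?case
    using Suc by (simp only: K_append_False)
qed simp

definition to_prod :: "(bool list \<Rightarrow> 'g) \<Rightarrow> (nat \<Rightarrow> bool) \<Rightarrow> 'g" where
  "to_prod a = restrict (\<lambda>x. (\<alpha> ^^ zero_tail x) (a (initial (zero_tail x) x))) Q2"

definition from_prod :: "((nat \<Rightarrow> bool) \<Rightarrow> 'g) \<Rightarrow> bool list \<Rightarrow> 'g" where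
  "from_prod f = (\<lambda>u. (\<beta> ^^ length u) (f (cat u zeros)))"

lemma aut_pow_initial_stable:
  assumes "a \<in> carrier K" "\<forall>m\<ge>n. \<not> x m"
  shows "(\<alpha> ^^ (n + d)) (a (initial (n + d) x)) = (\<alpha> ^^ n) (a (initial n x))"
  using K_append_replicate[OF assms(1)]
  by (simp add: initial_append_replicate[OF assms(2)] funpow_add)

lemma to_prod_eq:
  assumes "a \<in> carrier K" "\<forall>m\<ge>n. \<not> x m"
  shows "to_prod a x = (\<alpha> ^^ n) (a (initial n x))"
proof -
  have x: "x \<in> Q2"
    using assms(2) unfolding Q2_def by auto
  show ?thesis
  proof (cases "n \<le> zero_tail x")
    case True
    then show ?thesis
      using aut_pow_initial_stable[OF assms, of "zero_tail x - n"] x by (simp add: to_prod_def)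
  next
    case False
    then show ?thesis
      using aut_pow_initial_stable[OF assms(1) zero_tail[OF x], of "n - zero_tail x"] x
      by (simp add: to_prod_def)
  qed
qed

lemma to_prod_cat:
  assumes "a \<in> carrier K" "\<forall>m\<ge>N. \<not> w m"
  shows "to_prod a (cat s w) = (\<alpha> ^^ (length s + N)) (a (s @ initial N w))"
  using to_prod_eq[OF assms(1) cat_eventually_zero[OF assms(2)]] by (simp add: initial_cat)

lemma to_prod_cat_zeros: "a \<in> carrier K \<Longrightarrow> to_prod a (cat u zeros) = (\<alpha> ^^ length u) (a u)"
  using to_prod_eq[OF _ cat_zeros_eventually_zero] by (simp add: initial_length_cat)

lemma to_prod_closed: "a \<in> carrier K \<Longrightarrow> to_prod a \<in> carrier (ProdQ2 \<Gamma>)"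
  by (auto simp: to_prod_def ProdQ2_def K_closed aut_pow_closed)

lemma to_prod_mult:
  assumes "a \<in> carrier K" "b \<in> carrier K"
  shows "to_prod (a \<otimes>\<^bsub>K\<^esub> b) = to_prod a \<otimes>\<^bsub>ProdQ2 \<Gamma>\<^esub> to_prod b"
proof -
  have "a \<otimes>\<^bsub>K\<^esub> b = (\<lambda>u. a u \<otimes> b u)"
    by (simp add: K_grp_def)
  then show ?thesis
    unfolding to_prod_def ProdQ2_def monoid.simps
    by (intro restrict_ext) (simp add: aut_pow_mult K_closed assms)
qed

lemma from_prod_closed:
  assumes "f \<in> carrier (ProdQ2 \<Gamma>)"
  shows "from_prod f \<in> carrier K"
proof -
  have f: "f (cat u zeros) \<in> carrier \<Gamma>" for u
    using assms cat_zeros_in_Q2 by (auto simp: ProdQ2_def)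
  have "\<alpha> (\<beta> g) = g" if "g \<in> carrier \<Gamma>" for g
    using that bij_aut by (simp add: bij_betw_imp_surj_on f_inv_into_f)
  then show ?thesis
    unfolding K_grp_def from_prod_def
    using f by (simp add: aut_inv_pow_closed cat_append_False_zeros)
qed

lemma from_to_prod:
  assumes a: "a \<in> carrier K"
  shows "from_prod (to_prod a) = a"
proof
  fix u
  show "from_prod (to_prod a) u = a u"
    using inv_into_funpow_cancel[OF bij_aut K_closed[OF a]]
    by (simp add: from_prod_def to_prod_cat_zeros[OF a])
qed

lemma to_from_prod:
  assumes f: "f \<in> carrier (ProdQ2 \<Gamma>)"
  shows "to_prod (from_prod f) = f"
proof
  fix x
  show "to_prod (from_prod f) x = f x"
  proof (cases "x \<in> Q2")
    case True
    note tail = zero_tail[OF True]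
    have "to_prod (from_prod f) x = (\<alpha> ^^ zero_tail x) (from_prod f (initial (zero_tail x) x))"
      using to_prod_eq[OF from_prod_closed[OF f] tail] .
    also have "\<dots> = f x"
      using f True funpow_inv_into_cancel[OF bij_aut]
      by (simp add: from_prod_def cat_initial_zeros[OF tail] ProdQ2_def PiE_iff)
    finally show ?thesis .
  next
    case False
    then show ?thesis
      using f by (simp add: to_prod_def ProdQ2_def PiE_iff extensional_def)
  qed
qed

lemma to_prod_bij: "bij_betw to_prod (carrier K) (carrier (ProdQ2 \<Gamma>))"
  by (rule bij_betw_byWitness[where f' = from_prod])
    (auto simp: from_to_prod to_from_prod to_prod_closed from_prod_closed)

subsection \<open>Compatibility of the actions\<close>

lemma rho_act_to_prod_cat:
  assumes v: "bij v" "\<forall>w. v (cat t w) = cat s w" and w: "\<forall>m\<ge>N. \<not> w m"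
    and a: "a \<in> carrier K"
  shows "rho_act \<Gamma> \<alpha> v (to_prod a) (cat s w) = (\<alpha> ^^ (length s + N)) (a (t @ initial N w))"
proof -
  have x: "cat s w \<in> Q2"
    using cat_eventually_zero[OF w] unfolding Q2_def by blast
  have inv: "inv_into UNIV v (cat s w) = cat t w"
    using v by (metis bij_is_inj inv_into_f_f UNIV_I)
  have "int (length t + N) + - (int (length t) - int (length s)) = int (length s + N)"
    by simp
  then have "apow \<Gamma> \<alpha> (- (int (length t) - int (length s))) ((\<alpha> ^^ (length t + N)) (a (t @ initial N w)))
      = (\<alpha> ^^ (length s + N)) (a (t @ initial N w))"
    using apow_aut_pow[OF K_closed[OF a], of "length t + N"] by (metis nat_int of_nat_0_le_iff)
  then show ?thesis
    using x inv unfolding rho_act_def by (simp add: logder_cat[OF v(2)] to_prod_cat[OF a w])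
qed

lemma rho_act_closed:
  assumes v: "v \<in> ThompsonV" and a: "a \<in> carrier K"
  shows "rho_act \<Gamma> \<alpha> v (to_prod a) \<in> carrier (ProdQ2 \<Gamma>)"
proof -
  obtain ts ss \<sigma> where rep: "V_rep v ts ss \<sigma>" and "bij v"
    using v unfolding ThompsonV_def by blast
  have "rho_act \<Gamma> \<alpha> v (to_prod a) x \<in> carrier \<Gamma>" if "x \<in> Q2" for x
  proof -
    obtain i w N where "i < length ts" "x = cat (ss ! \<sigma> i) w" "\<forall>m\<ge>N. \<not> w m"
      using V_rep_Q2_cat[OF rep \<open>x \<in> Q2\<close>] .
    then show ?thesis
      using rho_act_to_prod_cat[OF \<open>bij v\<close> V_rep_cat[OF rep] _ a]
      by (simp add: aut_pow_closed K_closed[OF a])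
  qed
  then show ?thesis
    unfolding ProdQ2_def by (simp add: rho_act_def)
qed

lemma to_prod_relabel:
  assumes v: "bij v" and rep: "V_rep v ts ss \<sigma>" and a: "a \<in> carrier K" and c: "c \<in> carrier K"
    and relabel: "\<forall>i<length ts. \<forall>u. c (ss ! \<sigma> i @ u) = a (ts ! i @ u)"
  shows "to_prod c = rho_act \<Gamma> \<alpha> v (to_prod a)"
proof
  fix x
  show "to_prod c x = rho_act \<Gamma> \<alpha> v (to_prod a) x"
  proof (cases "x \<in> Q2")
    case True
    obtain i w N where i: "i < length ts" "x = cat (ss ! \<sigma> i) w" and w: "\<forall>m\<ge>N. \<not> w m"
      using V_rep_Q2_cat[OF rep True] .
    then show ?thesis
      using to_prod_cat[OF c w] rho_act_to_prod_cat[OF v V_rep_cat[OF rep i(1)] w a] relabel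
      by simp
  next
    case False
    then show ?thesis
      by (simp add: to_prod_def rho_act_def)
  qed
qed

lemma pi_act_eq:
  assumes v: "v \<in> ThompsonV" and a: "a \<in> carrier K"
  shows "pi_act \<Gamma> (\<lambda>g h. \<alpha> g) v a = from_prod (rho_act \<Gamma> \<alpha> v (to_prod a))"
  unfolding pi_act_def
proof (rule the_equality)
  obtain ts ss \<sigma> where rep: "V_rep v ts ss \<sigma>" and "bij v"
    using v unfolding ThompsonV_def by blast
  let ?b = "from_prod (rho_act \<Gamma> \<alpha> v (to_prod a))"
  have "?b (ss ! \<sigma> i @ u) = a (ts ! i @ u)" if "i < length ts" for i u
    using rho_act_to_prod_cat[OF \<open>bij v\<close> V_rep_cat[OF rep that] cat_zeros_eventually_zero a]
    by (simp add: from_prod_def cat_append initial_length_cat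
        inv_into_funpow_cancel[OF bij_aut] K_closed[OF a])
  then show "?b \<in> carrier K \<and> (\<exists>ts ss \<sigma>. V_rep v ts ss \<sigma> \<and>
      (\<forall>i<length ts. \<forall>u. ?b (ss ! \<sigma> i @ u) = a (ts ! i @ u)))"
    using rep from_prod_closed[OF rho_act_closed[OF v a]] by blast
next
  fix c
  assume "c \<in> carrier K \<and> (\<exists>ts ss \<sigma>. V_rep v ts ss \<sigma> \<and>
      (\<forall>i<length ts. \<forall>u. c (ss ! \<sigma> i @ u) = a (ts ! i @ u)))"
  moreover have "bij v"
    using v unfolding ThompsonV_def by blast
  ultimately have "to_prod c = rho_act \<Gamma> \<alpha> v (to_prod a)" and "c \<in> carrier K"
    using to_prod_relabel a by blast+
  then show "c = from_prod (rho_act \<Gamma> \<alpha> v (to_prod a))"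
    using from_to_prod by metis
qed

lemma pi_act_closed: "v \<in> ThompsonV \<Longrightarrow> a \<in> carrier K \<Longrightarrow> pi_act \<Gamma> (\<lambda>g h. \<alpha> g) v a \<in> carrier K"
  by (simp add: pi_act_eq from_prod_closed rho_act_closed)

lemma to_prod_pi_act:
  "v \<in> ThompsonV \<Longrightarrow> a \<in> carrier K \<Longrightarrow> to_prod (pi_act \<Gamma> (\<lambda>g h. \<alpha> g) v a) = rho_act \<Gamma> \<alpha> v (to_prod a)"
  by (simp add: pi_act_eq to_from_prod rho_act_closed)

end

theorem mainTheorem8:
  fixes \<Gamma> :: "('g, 'z) monoid_scheme" and \<alpha> :: "'g \<Rightarrow> 'g"
  assumes "group \<Gamma>" and "\<alpha> \<in> iso \<Gamma> \<Gamma>"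
  shows "G_omega \<Gamma> (\<lambda>g h. \<alpha> g) \<cong> Wreath \<Gamma> \<alpha>"
proof -
  interpret automorphism \<Gamma> \<alpha>
    using assms(2) by unfold_locales
  have "(\<lambda>(a, v). (to_prod a, v)) \<in> iso (G_omega \<Gamma> (\<lambda>g h. \<alpha> g)) (Wreath \<Gamma> \<alpha>)"
    unfolding G_omega_def Wreath_def
    by (rule semidirect_iso)
      (simp_all add: to_prod_bij to_prod_mult V_grp_def pi_act_closed to_prod_pi_act)
  then show ?thesis
    by (rule is_isoI)
qed

end
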